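(* Let $H$ be an $n\times n$ Hermitian matrix, $\hbar>0$, $\psi_0\in\mathbb C^n$ with $\|\psi_0\|=1$, $\rho_0=\psi_0\psi_0^\dagger$, and $\kappa(t)$ an arbitrary smooth curve of skew-Hermitian matrices. Let $U(t)\in\mathcal U(n)$ solve $\dot U=U\xi_H$ with $$\xi_H=-i\hbar^{-1}H_H+\{\mathbf 1-2\rho_0,\kappa\},\qquad H_H:=U^\dagger HU .$$ Then (i) $[\,i\hbar\xi_H-H_H,\rho_0]=0$; (ii) $\dot H_H=[H_H,\{\mathbf 1-2\rho_0,\kappa\}]$, and the energy is conserved: $\mathrm{Tr}(\rho_0\dot H_H)=0$; (iii) $\psi(t)=U(t)\psi_0$ satisfies $i\hbar\dot\psi=H\psi+\alpha\psi$ with the real function $\alpha=-2i\hbar\,\psi_0^\dagger\kappa\psi_0$.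
   Context: $\{A,B\}=AB+BA$, $[A,B]=AB-BA$, $\mathbf 1$ is the identity matrix. *)

theory Defs
  imports "HOL-Analysis.Analysis"
begin

text \<open>Complex n x n matrices are modelled as complex^'n^'n (n = CARD('n)).\<close>

definition conj_transpose :: "complex^'n^'m \<Rightarrow> complex^'m^'n" where
  "conj_transpose A = (\<chi> i j. cnj (A $ j $ i))"

definition hermitian :: "complex^'n^'n \<Rightarrow> bool" where
  "hermitian A \<longleftrightarrow> conj_transpose A = A"

definition skew_hermitian :: "complex^'n^'n \<Rightarrow> bool" where
  "skew_hermitian A \<longleftrightarrow> conj_transpose A = - A"

definition unitary :: "complex^'n^'n \<Rightarrow> bool" where
  "unitary U \<longleftrightarrow> conj_transpose U ** U = mat 1 \<and> U ** conj_transpose U = mat 1"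

definition cscale :: "complex \<Rightarrow> complex^'n^'m \<Rightarrow> complex^'n^'m" where
  "cscale c A = (\<chi> i j. c * A $ i $ j)"

definition anticomm :: "complex^'n^'n \<Rightarrow> complex^'n^'n \<Rightarrow> complex^'n^'n" where
  "anticomm A B = A ** B + B ** A"

definition comm :: "complex^'n^'n \<Rightarrow> complex^'n^'n \<Rightarrow> complex^'n^'n" where
  "comm A B = A ** B - B ** A"

definition outer :: "complex^'n \<Rightarrow> complex^'n \<Rightarrow> complex^'n^'n" where
  "outer x y = (\<chi> i j. x $ i * cnj (y $ j))"

definition herm_inner :: "complex^'n \<Rightarrow> complex^'n \<Rightarrow> complex" where
  "herm_inner x y = (\<Sum>i\<in>UNIV. cnj (x $ i) * y $ i)"

fun nth_vderiv :: "nat \<Rightarrow> (real \<Rightarrow> 'a::real_normed_vector) \<Rightarrow> real \<Rightarrow> 'a" where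
  "nth_vderiv 0 f = f"
| "nth_vderiv (Suc k) f = (\<lambda>t. vector_derivative (nth_vderiv k f) (at t))"

definition smooth_on :: "real set \<Rightarrow> (real \<Rightarrow> 'a::real_normed_vector) \<Rightarrow> bool" where
  "smooth_on S f \<longleftrightarrow> (\<forall>k. \<forall>t\<in>S. nth_vderiv k f differentiable (at t))"

end

theory Submission imports Defs begin

text \<open>Write \<open>\<rho>\<^sub>0 = \<psi>\<^sub>0\<psi>\<^sub>0\<^sup>\<dagger>\<close> and \<open>P = \<one> - 2\<rho>\<^sub>0\<close>. Since \<open>\<rho>\<^sub>0\<close> is an idempotent, \<open>P\<rho>\<^sub>0 = \<rho>\<^sub>0P = -\<rho>\<^sub>0\<close>,
  so the generator \<open>A = {P,\<kappa>}\<close> commutes with \<open>\<rho>\<^sub>0\<close> (both \<open>A\<rho>\<^sub>0\<close> and \<open>\<rho>\<^sub>0A\<close> equal \<open>-2\<rho>\<^sub>0\<kappa>\<rho>\<^sub>0\<close>)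
  and acts on \<open>\<psi>\<^sub>0\<close> as the scalar \<open>-2\<psi>\<^sub>0\<^sup>\<dagger>\<kappa>\<psi>\<^sub>0\<close>. This gives (i) directly, and the trace in (ii)
  vanishes by cyclicity. Differentiating \<open>H\<^sub>H = U\<^sup>\<dagger>HU\<close> gives \<open>H\<^sub>H\<xi> + \<xi>\<^sup>\<dagger>H\<^sub>H\<close>, in which the
  Hamiltonian part of \<open>\<xi>\<close> cancels because \<open>H\<^sub>H\<close> is Hermitian and \<open>A\<close> skew-Hermitian. Finally
  \<open>\<psi>' = U\<xi>\<psi>\<^sub>0\<close>, and unitarity turns \<open>UH\<^sub>H\<psi>\<^sub>0\<close> into \<open>H\<psi>\<close>.\<close>

lemma cscale_mult_left: "cscale c (A ** B) = cscale c A ** B"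
  by (simp add: cscale_def matrix_matrix_mult_def vec_eq_iff sum_distrib_left mult.assoc)

lemma cscale_mult_right: "A ** cscale c B = cscale c (A ** B)"
  by (simp add: cscale_def matrix_matrix_mult_def vec_eq_iff sum_distrib_left algebra_simps)

lemma cscale_add: "cscale c (A + B) = cscale c A + cscale c B"
  by (simp add: cscale_def vec_eq_iff algebra_simps)

lemma cscale_cscale: "cscale c (cscale d A) = cscale (c * d) A"
  by (simp add: cscale_def vec_eq_iff algebra_simps)

lemma cscale_1: "cscale 1 A = A"
  by (simp add: cscale_def vec_eq_iff)

lemma cscale_minus: "cscale (- c) A = - cscale c A"
  by (simp add: cscale_def vec_eq_iff)

lemma cscale_mult_vector: "cscale c A *v v = c *s (A *v v)"
  by (simp add: cscale_def matrix_vector_mult_def vec_eq_iff sum_distrib_left mult.assoc)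

lemma matrix_mult_sub_left: "(B - C) ** A = B ** A - C ** A" for A B C :: "complex^_^_"
  by (vector matrix_matrix_mult_def sum_subtractf[symmetric] field_simps)

lemma matrix_mult_sub_right: "A ** (B - C) = A ** B - A ** C" for A B C :: "complex^_^_"
  by (vector matrix_matrix_mult_def sum_subtractf[symmetric] field_simps)

lemma matrix_mult_add_left: "(B + C) ** A = B ** A + C ** A" for A B C :: "complex^_^_"
  by (vector matrix_matrix_mult_def sum.distrib[symmetric] field_simps)

lemma matrix_mult_uminus_left: "(- B) ** A = - (B ** A)" for A B :: "complex^_^_"
  by (vector matrix_matrix_mult_def sum_negf[symmetric] field_simps)

lemma matrix_mult_uminus_right: "A ** (- B) = - (A ** B)" for A B :: "complex^_^_"
  by (vector matrix_matrix_mult_def sum_negf[symmetric] field_simps)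

lemma matrix_vector_mult_uminus_left: "(- A) *v v = - (A *v v)" for v :: "complex^_"
  by (simp add: matrix_vector_mult_def vec_eq_iff sum_negf)

lemma matrix_vector_mult_uminus_right: "A *v (- v) = - (A *v v)" for v :: "complex^_"
  by (simp add: matrix_vector_mult_def vec_eq_iff sum_negf)

lemma matrix_vector_mult_scaleC: "A *v (c *s v) = c *s (A *v v)" for v :: "complex^_"
  by (simp add: matrix_vector_mult_def vec_eq_iff sum_distrib_left algebra_simps)

lemma conj_transpose_mult: "conj_transpose (A ** B) = conj_transpose B ** conj_transpose A"
  by (simp add: conj_transpose_def matrix_matrix_mult_def vec_eq_iff mult.commute)

lemma conj_transpose_add: "conj_transpose (A + B) = conj_transpose A + conj_transpose B"
  by (simp add: conj_transpose_def vec_eq_iff)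

lemma conj_transpose_diff: "conj_transpose (A - B) = conj_transpose A - conj_transpose B"
  by (simp add: conj_transpose_def vec_eq_iff)

lemma conj_transpose_cscale: "conj_transpose (cscale c A) = cscale (cnj c) (conj_transpose A)"
  by (simp add: conj_transpose_def cscale_def vec_eq_iff)

lemma conj_transpose_conj_transpose: "conj_transpose (conj_transpose A) = A"
  by (simp add: conj_transpose_def vec_eq_iff)

lemma conj_transpose_mat_1: "conj_transpose (mat 1 :: complex^'n^'n) = mat 1"
  by (simp add: conj_transpose_def vec_eq_iff mat_def)

lemma bounded_linear_conj_transpose: "bounded_linear (conj_transpose :: complex^'n^'m \<Rightarrow> _)"
  unfolding linear_conv_bounded_linear[symmetric] linear_iff
  by (auto simp: conj_transpose_add conj_transpose_def vec_eq_iff vector_scaleR_component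
      scaleR_conv_of_real[where 'a=complex])

lemma bounded_bilinear_matrix_mult:
  "bounded_bilinear ((**) :: complex^'n^'m \<Rightarrow> complex^'k^'n \<Rightarrow> complex^'k^'m)"
  unfolding bilinear_conv_bounded_bilinear[symmetric] bilinear_def linear_iff
  by (auto simp: matrix_add_ldistrib matrix_mult_add_left vec_eq_iff matrix_matrix_mult_def
      vector_scaleR_component scaleR_conv_of_real[where 'a=complex] sum.distrib sum_distrib_left
      algebra_simps)

lemma bounded_linear_matrix_vector_mult_left: "bounded_linear (\<lambda>A::complex^'n^'m. A *v v)"
  unfolding linear_conv_bounded_linear[symmetric] linear_iff
  by (auto simp: matrix_vector_mult_add_rdistrib vec_eq_iff matrix_vector_mult_def
      vector_scaleR_component scaleR_conv_of_real[where 'a=complex] sum.distrib sum_distrib_left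
      algebra_simps)

lemma outer_mult_vector: "outer x y *v z = herm_inner y z *s x"
  by (simp add: outer_def herm_inner_def matrix_vector_mult_def vec_eq_iff sum_distrib_left
      algebra_simps)

lemma outer_mult_outer: "outer x y ** outer z w = cscale (herm_inner y z) (outer x w)"
  by (simp add: outer_def herm_inner_def cscale_def matrix_matrix_mult_def vec_eq_iff
      sum_distrib_left sum_distrib_right algebra_simps)

lemma herm_inner_self: "herm_inner x x = of_real ((norm x)\<^sup>2)"
proof -
  have "herm_inner x x = (\<Sum>i\<in>UNIV. of_real ((norm (x $ i))\<^sup>2))"
    unfolding herm_inner_def
    by (rule sum.cong) (auto simp: complex_norm_square[symmetric] mult.commute)
  also have "\<dots> = of_real ((norm x)\<^sup>2)"
    by (simp add: norm_vec_def L2_set_def sum_nonneg of_real_power[symmetric] del: of_real_power)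
  finally show ?thesis .
qed

lemma cnj_herm_inner: "cnj (herm_inner x y) = herm_inner y x"
  by (simp add: herm_inner_def mult.commute)

lemma herm_inner_uminus_left: "herm_inner (- x) y = - herm_inner x y"
  by (simp add: herm_inner_def sum_negf)

lemma herm_inner_adjoint: "herm_inner x (A *v y) = herm_inner (conj_transpose A *v x) y"
proof -
  have "herm_inner x (A *v y) = (\<Sum>i\<in>UNIV. \<Sum>j\<in>UNIV. cnj (x $ i) * (A $ i $ j * y $ j))"
    by (simp add: herm_inner_def matrix_vector_mult_def sum_distrib_left)
  also have "\<dots> = (\<Sum>j\<in>UNIV. \<Sum>i\<in>UNIV. cnj (x $ i) * (A $ i $ j * y $ j))"
    by (rule sum.swap)
  also have "\<dots> = herm_inner (conj_transpose A *v x) y"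
    by (simp add: herm_inner_def matrix_vector_mult_def conj_transpose_def sum_distrib_left
        sum_distrib_right algebra_simps)
  finally show ?thesis .
qed

lemma hermitian_outer_self: "hermitian (outer x x)"
  by (simp add: hermitian_def conj_transpose_def outer_def vec_eq_iff)

lemma hermitian_reflection: "hermitian R \<Longrightarrow> hermitian (mat 1 - cscale 2 R)"
  by (simp add: hermitian_def conj_transpose_diff conj_transpose_mat_1 conj_transpose_cscale)

lemma hermitian_conjugate: "hermitian H \<Longrightarrow> hermitian (conj_transpose U ** H ** U)"
  by (simp add: hermitian_def conj_transpose_mult conj_transpose_conj_transpose matrix_mul_assoc)

lemma skew_hermitian_anticomm:
  "hermitian P \<Longrightarrow> skew_hermitian K \<Longrightarrow> skew_hermitian (anticomm P K)"
  by (simp add: hermitian_def skew_hermitian_def anticomm_def conj_transpose_add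
      conj_transpose_mult matrix_mult_uminus_left matrix_mult_uminus_right)

lemma skew_hermitian_quadratic_form:
  assumes "skew_hermitian K"
  shows "cnj (herm_inner x (K *v x)) = - herm_inner x (K *v x)"
proof -
  have "herm_inner x (K *v x) = - herm_inner (K *v x) x"
    using assms by (simp add: herm_inner_adjoint skew_hermitian_def matrix_vector_mult_uminus_left
        herm_inner_uminus_left)
  then show ?thesis by (simp add: cnj_herm_inner)
qed

lemma idempotent_outer_self: "norm x = 1 \<Longrightarrow> outer x x ** outer x x = outer x x"
  by (simp add: outer_mult_outer herm_inner_self cscale_1)

lemma reflection_mult_idempotent:
  fixes R :: "complex^'n^'n"
  assumes "R ** R = R"
  shows "(mat 1 - cscale 2 R) ** R = - R" and "R ** (mat 1 - cscale 2 R) = - R"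
proof -
  have "R - cscale 2 R = - R" by (simp add: cscale_def vec_eq_iff)
  then show "(mat 1 - cscale 2 R) ** R = - R" and "R ** (mat 1 - cscale 2 R) = - R"
    using assms by (simp_all add: matrix_mult_sub_left matrix_mult_sub_right
        cscale_mult_left[symmetric] cscale_mult_right)
qed

lemma anticomm_reflection_commute:
  fixes R K :: "complex^'n^'n"
  assumes "R ** R = R"
  shows "anticomm (mat 1 - cscale 2 R) K ** R = R ** anticomm (mat 1 - cscale 2 R) K"
proof -
  define P where "P = mat 1 - cscale 2 R"
  have PR: "P ** R = - R" and RP: "R ** P = - R"
    unfolding P_def using reflection_mult_idempotent[OF assms] by simp_all
  have "anticomm P K ** R = P ** K ** R - K ** R"
    unfolding anticomm_def
    by (simp add: matrix_mult_add_left matrix_mul_assoc[symmetric] PR matrix_mult_uminus_right)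
  also have "\<dots> = - cscale 2 (R ** K ** R)"
    unfolding P_def by (simp add: matrix_mult_sub_left cscale_mult_left[symmetric] matrix_mul_assoc)
  also have "\<dots> = R ** K ** P - R ** K"
    unfolding P_def
    by (simp add: matrix_mult_sub_right cscale_mult_right matrix_mul_assoc assms)
  also have "\<dots> = R ** anticomm P K"
    unfolding anticomm_def
    by (simp add: matrix_add_ldistrib matrix_mul_assoc RP matrix_mult_uminus_left)
  finally show ?thesis unfolding P_def .
qed

lemma anticomm_reflection_mult_unit:
  assumes "norm x = 1"
  shows "anticomm (mat 1 - cscale 2 (outer x x)) K *v x = (- 2 * herm_inner x (K *v x)) *s x"
proof -
  define P where "P = mat 1 - cscale 2 (outer x x)"
  have P_mult: "P *v w = w - (2 * herm_inner x w) *s x" for w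
    unfolding P_def
    by (simp add: matrix_vector_mult_diff_rdistrib cscale_mult_vector outer_mult_vector vec_eq_iff)
  have "herm_inner x x = 1" using assms by (simp add: herm_inner_self)
  then have "P *v x = - x" by (simp add: P_mult vec_eq_iff)
  then have "anticomm P K *v x = P *v (K *v x) + K *v (- x)"
    unfolding anticomm_def
    by (simp add: matrix_vector_mult_add_rdistrib matrix_vector_mul_assoc[symmetric])
  then show ?thesis
    unfolding P_def[symmetric]
    by (simp add: P_mult matrix_vector_mult_uminus_right vec_eq_iff)
qed

lemma cscale_generator_diff:
  assumes "h \<noteq> 0"
  shows "cscale (\<i> * h) (cscale (- \<i> / h) X + A) - X = cscale (\<i> * h) A"
proof -
  have "(\<i> * h) * (- \<i> / h) = 1" using assms by (simp add: field_simps)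
  then show ?thesis by (simp add: cscale_add cscale_cscale cscale_1)
qed

lemma trace_mult_comm_eq_0:
  fixes R A X :: "complex^'n^'n"
  assumes "A ** R = R ** A"
  shows "trace (R ** comm X A) = 0"
proof -
  have "trace (R ** (A ** X)) = trace (A ** (R ** X))"
    by (metis assms matrix_mul_assoc)
  also have "\<dots> = trace (R ** X ** A)" by (rule trace_mul_sym)
  finally show ?thesis
    by (simp add: comm_def matrix_mult_sub_right trace_sub matrix_mul_assoc)
qed

lemma has_vector_derivative_conjugate:
  assumes "(U has_vector_derivative U t ** X) (at t within S)"
  shows "((\<lambda>s. conj_transpose (U s) ** H ** U s) has_vector_derivative
      (conj_transpose (U t) ** H ** U t) ** X + conj_transpose X ** (conj_transpose (U t) ** H ** U t))
      (at t within S)"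
proof -
  have "((\<lambda>s. conj_transpose (U s) ** H) has_vector_derivative conj_transpose (U t ** X) ** H)
      (at t within S)"
    by (intro bounded_linear.has_vector_derivative[OF
          bounded_bilinear.bounded_linear_left[OF bounded_bilinear_matrix_mult]]
          bounded_linear.has_vector_derivative[OF bounded_linear_conj_transpose assms])
  from bounded_bilinear.has_vector_derivative[OF bounded_bilinear_matrix_mult this assms]
  show ?thesis
    by (simp add: conj_transpose_mult matrix_mul_assoc add.commute)
qed

lemma conjugate_derivative_eq_comm:
  assumes "hermitian X" "skew_hermitian A" "cnj c = - c"
  shows "X ** (cscale c X + A) + conj_transpose (cscale c X + A) ** X = comm X A"
  using assms
  by (simp add: hermitian_def skew_hermitian_def conj_transpose_add conj_transpose_cscale
      cscale_minus comm_def matrix_add_ldistrib matrix_mult_sub_left matrix_mult_uminus_left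
      cscale_mult_left[symmetric] cscale_mult_right)

lemma schroedinger_from_generator:
  fixes V H A :: "complex^'n^'n"
  assumes "unitary V" "h \<noteq> 0" "A *v x = a *s x"
  shows "(\<i> * h) *s ((V ** (cscale (- \<i> / h) (conj_transpose V ** H ** V) + A)) *v x)
    = H *v (V *v x) + (\<i> * h * a) *s (V *v x)"
proof -
  let ?HH = "conj_transpose V ** H ** V"
  have VV: "V *v (conj_transpose V *v y) = y" for y
    using assms(1) by (simp add: unitary_def matrix_vector_mul_assoc)
  have "(V ** (cscale (- \<i> / h) ?HH + A)) *v x = (- \<i> / h) *s (V *v (?HH *v x)) + a *s (V *v x)"
    using assms(3) by (simp add: matrix_vector_mul_assoc[symmetric] matrix_vector_right_distrib
        matrix_vector_mult_diff_distrib
        matrix_vector_mult_add_rdistrib cscale_mult_vector matrix_vector_mult_scaleC)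
  also have "V *v (?HH *v x) = H *v (V *v x)"
    by (simp add: matrix_vector_mul_assoc[symmetric] VV)
  finally have generator: "(V ** (cscale (- \<i> / h) ?HH + A)) *v x
      = (- \<i> / h) *s (H *v (V *v x)) + a *s (V *v x)" .
  have distrib: "(\<i> * h) *s ((- \<i> / h) *s y + a *s z)
      = ((\<i> * h) * (- \<i> / h)) *s y + (\<i> * h * a) *s z" for y z :: "complex^'n"
    by (simp add: vec_eq_iff ring_distribs mult.assoc)
  have "(\<i> * h) * (- \<i> / h) = 1" using assms(2) by (simp add: field_simps)
  then show ?thesis unfolding generator distrib by simp
qed

theorem mainTheorem7:
  fixes H :: "complex^'n^'n"
    and hbar :: real
    and psi0 :: "complex^'n"
    and kappa U :: "real \<Rightarrow> complex^'n^'n"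
    and T :: "real set"
  assumes hH: "hermitian H"
    and hbar: "hbar > 0"
    and psi0: "norm psi0 = 1"
    and T: "open T"
    and kappa_skew: "\<forall>t\<in>T. skew_hermitian (kappa t)"
    and kappa_smooth: "smooth_on T kappa"
    and U_unitary: "\<forall>t\<in>T. unitary (U t)"
    and U_ode: "\<forall>t\<in>T. (U has_vector_derivative
        (U t ** (cscale (- \<i> / hbar) (conj_transpose (U t) ** H ** U t)
                 + anticomm (mat 1 - cscale 2 (outer psi0 psi0)) (kappa t)))) (at t)"
    and t: "t \<in> T"
  shows "let rho0 = outer psi0 psi0;
             HH = (\<lambda>s. conj_transpose (U s) ** H ** U s);
             xi = cscale (- \<i> / hbar) (HH t) + anticomm (mat 1 - cscale 2 rho0) (kappa t);
             psi = (\<lambda>s. U s *v psi0);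
             alpha = - 2 * \<i> * hbar * herm_inner psi0 (kappa t *v psi0)
         in comm (cscale (\<i> * hbar) xi - HH t) rho0 = 0
          \<and> HH differentiable (at t)
          \<and> vector_derivative HH (at t) = comm (HH t) (anticomm (mat 1 - cscale 2 rho0) (kappa t))
          \<and> trace (rho0 ** vector_derivative HH (at t)) = 0
          \<and> alpha \<in> \<real>
          \<and> psi differentiable (at t)
          \<and> (\<i> * hbar) *s vector_derivative psi (at t) = H *v psi t + alpha *s psi t"
proof -
  let ?rho = "outer psi0 psi0"
  let ?A = "anticomm (mat 1 - cscale 2 ?rho) (kappa t)"
  let ?HH = "\<lambda>s. conj_transpose (U s) ** H ** U s"
  let ?Ht = "conj_transpose (U t) ** H ** U t"
  let ?xi = "cscale (- \<i> / hbar) ?Ht + ?A"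
  let ?c = "herm_inner psi0 (kappa t *v psi0)"
  have hbar0: "complex_of_real hbar \<noteq> 0" using hbar by simp
  have A_rho: "?A ** ?rho = ?rho ** ?A"
    by (intro anticomm_reflection_commute idempotent_outer_self psi0)
  have A_skew: "skew_hermitian ?A"
    using kappa_skew t by (simp add: skew_hermitian_anticomm hermitian_reflection hermitian_outer_self)
  have dU: "(U has_vector_derivative U t ** ?xi) (at t)"
    using U_ode t by simp
  have dHH: "(?HH has_vector_derivative comm ?Ht ?A) (at t)"
    using has_vector_derivative_conjugate[OF dU, of H]
      conjugate_derivative_eq_comm[OF hermitian_conjugate[OF hH] A_skew, of "- \<i> / hbar"]
    by simp
  have dpsi: "((\<lambda>s. U s *v psi0) has_vector_derivative (U t ** ?xi) *v psi0) (at t)"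
    by (rule bounded_linear.has_vector_derivative[OF bounded_linear_matrix_vector_mult_left dU])
  have "cnj ?c = - ?c"
    using kappa_skew t by (simp add: skew_hermitian_quadratic_form)
  show ?thesis
    unfolding Let_def
  proof (intro conjI)
    show "comm (cscale (\<i> * hbar) ?xi - ?Ht) ?rho = 0"
      unfolding cscale_generator_diff[OF hbar0] comm_def cscale_mult_right
        cscale_mult_left[symmetric] A_rho by simp
    show "trace (?rho ** vector_derivative ?HH (at t)) = 0"
      using trace_mult_comm_eq_0[OF A_rho] vector_derivative_at[OF dHH] by simp
    show "- 2 * \<i> * hbar * ?c \<in> \<real>"
      using \<open>cnj ?c = - ?c\<close> by (simp add: Reals_cnj_iff)
    show "(\<i> * hbar) *s vector_derivative (\<lambda>s. U s *v psi0) (at t)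
        = H *v (U t *v psi0) + (- 2 * \<i> * hbar * ?c) *s (U t *v psi0)"
      using schroedinger_from_generator[OF _ hbar0 anticomm_reflection_mult_unit[OF psi0]]
        U_unitary t vector_derivative_at[OF dpsi]
      by (simp add: mult.assoc mult.left_commute)
  qed (use dHH dpsi in \<open>auto intro: differentiableI_vector vector_derivative_at\<close>)
qed

end
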